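(* Let $\mathfrak{S}=(\mathcal{X},\mathsf{S},\gamma,(\Lambda_{a})_{a\in\mathcal{A}})$ be a spectral decomposition system for the Euclidean space $\mathfrak{H}$ and let $\varphi\colon\mathcal{X}\to\left]-\infty,+\infty\right]$ be $\mathsf{S}$-invariant. Then $(\varphi\circ\gamma)^*=\varphi^*\circ\gamma$.
   Context: A Euclidean space is a finite-dimensional real inner product space; inner products are written $\langle\cdot,\cdot\rangle$ and norms $\|\cdot\|$. Let $\mathfrak{H}$ and $\mathcal{X}$ be Euclidean spaces, let $\mathsf{S}$ be a group acting on $\mathcal{X}$ by linear isometries, let $\gamma\colon\mathfrak{H}\to\mathcal{X}$, and let $(\Lambda_a)_{a\in\mathcal{A}}$ be a family of linear operators from $\mathcal{X}$ to $\mathfrak{H}$. The orbit of $x$ is $\mathsf{S}\cdot x=\{s\cdot x: s\in\mathsf{S}\}$; a map $f$ on $\mathcal{X}$ is $\mathsf{S}$-invariant if $f(s\cdot x)=f(x)$ for all $s,x$. The tuple is a spectral decomposition system for $\mathfrak{H}$ if: [A] every $\Lambda_a$ is an isometry; [B] there exists an $\mathsf{S}$-invariant $\tau\colon\mathcal{X}\to\mathcal{X}$ with $\tau(x)\in\mathsf{S}\cdot x$ for all $x$ and $\gamma\circ\Lambda_a=\tau$ for all $a$; [C] for every $X\in\mathfrak{H}$ there is $a$ with $X=\Lambda_a\gamma(X)$; [D] $\langle X,Y\rangle\leq\langle\gamma(X),\gamma(Y)\rangle$ for all $X,Y\in\mathfrak{H}$. The Fenchel conjugate of $f$ on a Euclidean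 space $\mathcal{H}$ is $f^*(y)=\sup_{x\in\mathcal{H}}(\langle x,y\rangle-f(x))$. *)

theory Defs
  imports "HOL-Analysis.Analysis" "HOL-Library.Extended_Real" "HOL-Algebra.Group_Action"
begin

definition fenchel_conj :: "('a::euclidean_space \<Rightarrow> ereal) \<Rightarrow> 'a \<Rightarrow> ereal" where
  "fenchel_conj f y = (SUP x. ereal (inner x y) - f x)"

definition linear_isometric_action :: "('g, 'b) monoid_scheme \<Rightarrow> ('g \<Rightarrow> 'x::euclidean_space \<Rightarrow> 'x) \<Rightarrow> bool" where
  "linear_isometric_action G act \<longleftrightarrow>
     group_action G UNIV act \<and>
     (\<forall>g\<in>carrier G. linear (act g) \<and> (\<forall>x. norm (act g x) = norm x))"

definition S_invariant :: "('g, 'b) monoid_scheme \<Rightarrow> ('g \<Rightarrow> 'x \<Rightarrow> 'x) \<Rightarrow> ('x \<Rightarrow> 'c) \<Rightarrow> bool" where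
  "S_invariant G act f \<longleftrightarrow> (\<forall>g\<in>carrier G. \<forall>x. f (act g x) = f x)"

definition spectral_decomposition_system ::
  "('g, 'b) monoid_scheme \<Rightarrow> ('g \<Rightarrow> 'x::euclidean_space \<Rightarrow> 'x) \<Rightarrow> ('h::euclidean_space \<Rightarrow> 'x)
     \<Rightarrow> ('i \<Rightarrow> 'x \<Rightarrow> 'h) \<Rightarrow> 'i set \<Rightarrow> bool" where
  "spectral_decomposition_system G act \<gamma> \<Lambda> A \<longleftrightarrow>
     linear_isometric_action G act \<and>
     (\<forall>a\<in>A. linear (\<Lambda> a) \<and> (\<forall>x. norm (\<Lambda> a x) = norm x)) \<and>
     (\<exists>\<tau>. S_invariant G act \<tau> \<and> (\<forall>x. \<tau> x \<in> orbit G act x) \<and> (\<forall>a\<in>A. \<gamma> \<circ> \<Lambda> a = \<tau>)) \<and>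
     (\<forall>X. \<exists>a\<in>A. X = \<Lambda> a (\<gamma> X)) \<and>
     (\<forall>X Y. inner X Y \<le> inner (\<gamma> X) (\<gamma> Y))"

end

theory Submission
  imports Defs
begin

text \<open>Condition [D] gives the inequality \<open>(\<phi> \<circ> \<gamma>)\<^sup>* Y \<le> \<phi>\<^sup>* (\<gamma> Y)\<close> at once. For the
  converse, [C] writes \<open>Y = \<Lambda>\<^sub>a (\<gamma> Y)\<close>; the isometry \<open>\<Lambda>\<^sub>a\<close> then transports \<open>\<langle>x, \<gamma> Y\<rangle>\<close> to
  \<open>\<langle>\<Lambda>\<^sub>a x, Y\<rangle>\<close>, while by [B] the point \<open>\<gamma> (\<Lambda>\<^sub>a x) = \<tau> x\<close> lies in the orbit of \<open>x\<close>, so that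
  \<open>\<phi> (\<gamma> (\<Lambda>\<^sub>a x)) = \<phi> x\<close>. Hence every term of the supremum defining \<open>\<phi>\<^sup>* (\<gamma> Y)\<close> also occurs
  in the one defining \<open>(\<phi> \<circ> \<gamma>)\<^sup>* Y\<close>.\<close>

lemma linear_isometry_inner:
  fixes f :: "'a::real_inner \<Rightarrow> 'b::real_inner"
  assumes "linear f" and "\<And>x. norm (f x) = norm x"
  shows "inner (f x) (f y) = inner x y"
  by (simp add: dot_norm[of "f x"] dot_norm[of x] linear_add[OF assms(1), symmetric] assms(2))

lemma S_invariant_orbit:
  assumes "S_invariant G act f" and "y \<in> orbit G act x"
  shows "f y = f x"
  using assms unfolding S_invariant_def orbit_def by blast

lemma fenchel_conj_le_fenchel_conj:
  assumes "\<And>x. \<exists>X. ereal (inner x y) - f x \<le> ereal (inner X Y) - g X"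
  shows "fenchel_conj f y \<le> fenchel_conj g Y"
  unfolding fenchel_conj_def by (rule SUP_mono) (use assms in blast)

lemma spectral_decomposition_system_inner_le:
  assumes "spectral_decomposition_system G act \<gamma> \<Lambda> A"
  shows "inner X Y \<le> inner (\<gamma> X) (\<gamma> Y)"
  using assms unfolding spectral_decomposition_system_def by blast

lemma spectral_decomposition_system_lift:
  assumes "spectral_decomposition_system G act \<gamma> \<Lambda> A"
  obtains L where "\<And>x. inner (L x) Y = inner x (\<gamma> Y)" and "\<And>x. \<gamma> (L x) \<in> orbit G act x"
proof -
  note sds = assms[unfolded spectral_decomposition_system_def]
  obtain \<tau> where \<tau>_orbit: "\<And>x. \<tau> x \<in> orbit G act x" and \<gamma>_\<Lambda>: "\<forall>a\<in>A. \<gamma> \<circ> \<Lambda> a = \<tau>"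
    using sds by blast
  obtain a where "a \<in> A" and Y: "Y = \<Lambda> a (\<gamma> Y)"
    using sds by blast
  have "linear (\<Lambda> a)" and "\<And>x. norm (\<Lambda> a x) = norm x"
    using sds \<open>a \<in> A\<close> by auto
  then have "inner (\<Lambda> a x) Y = inner x (\<gamma> Y)" for x
    by (subst Y) (rule linear_isometry_inner)
  moreover have "\<gamma> (\<Lambda> a x) \<in> orbit G act x" for x
    using \<tau>_orbit \<gamma>_\<Lambda> \<open>a \<in> A\<close> by (metis comp_apply)
  ultimately show thesis
    by (rule that)
qed

theorem corollary5p3:
  fixes G :: "('g, 'b) monoid_scheme"
    and act :: "'g \<Rightarrow> 'x::euclidean_space \<Rightarrow> 'x"
    and \<gamma> :: "'h::euclidean_space \<Rightarrow> 'x"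
    and \<Lambda> :: "'i \<Rightarrow> 'x \<Rightarrow> 'h"
    and A :: "'i set"
    and \<phi> :: "'x \<Rightarrow> ereal"
  assumes "spectral_decomposition_system G act \<gamma> \<Lambda> A"
    and "\<forall>x. \<phi> x \<noteq> -\<infinity>"
    and "S_invariant G act \<phi>"
  shows "fenchel_conj (\<phi> \<circ> \<gamma>) = fenchel_conj \<phi> \<circ> \<gamma>"
proof
  fix Y
  have "fenchel_conj (\<phi> \<circ> \<gamma>) Y \<le> fenchel_conj \<phi> (\<gamma> Y)"
  proof (rule fenchel_conj_le_fenchel_conj)
    show "\<exists>x. ereal (inner X Y) - (\<phi> \<circ> \<gamma>) X \<le> ereal (inner x (\<gamma> Y)) - \<phi> x" for X
      using spectral_decomposition_system_inner_le[OF assms(1)] by (intro exI ereal_minus_mono) auto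
  qed
  moreover obtain L where "\<And>x. inner (L x) Y = inner x (\<gamma> Y)" and "\<And>x. \<gamma> (L x) \<in> orbit G act x"
    using spectral_decomposition_system_lift[OF assms(1)] by blast
  then have "fenchel_conj \<phi> (\<gamma> Y) \<le> fenchel_conj (\<phi> \<circ> \<gamma>) Y"
    using S_invariant_orbit[OF assms(3)] by (intro fenchel_conj_le_fenchel_conj) (metis comp_apply order_refl)
  ultimately show "fenchel_conj (\<phi> \<circ> \<gamma>) Y = (fenchel_conj \<phi> \<circ> \<gamma>) Y"
    by simp
qed

end
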